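(* If $Q$ is a Jordan loop of order $9$ and $x\in Q$ satisfies $\langle x\rangle=Q$, then $Q=\{x^k:1\le k\le 9\}$ and $x^n=x^{(n\bmod 9)}$ for all integers $n\ge 0$.
   Context: A loop is a set $Q$ with a binary operation (juxtaposition) and neutral element $e$ such that for all $a,b$ the equations $ax=b$, $ya=b$ have unique solutions. A Jordan loop is a commutative loop satisfying $x^2(yx)=(x^2y)x$. For $k\ge 0$, $x^k$ denotes the right-associated product $x(x(\cdots(xe)\cdots))$ with $k$ factors $x$ (so $x^0=e$). $\langle x\rangle$ denotes the subloop generated by $x$. *)

theory Defs
  imports Main
begin

definition loop :: "'a set \<Rightarrow> ('a \<Rightarrow> 'a \<Rightarrow> 'a) \<Rightarrow> 'a \<Rightarrow> bool" where
  "loop Q m e \<longleftrightarrow> e \<in> Q \<and> (\<forall>a\<in>Q. \<forall>b\<in>Q. m a b \<in> Q)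
     \<and> (\<forall>a\<in>Q. m e a = a \<and> m a e = a)
     \<and> (\<forall>a\<in>Q. \<forall>b\<in>Q. (\<exists>!x. x \<in> Q \<and> m a x = b) \<and> (\<exists>!y. y \<in> Q \<and> m y a = b))"

definition jordan_loop :: "'a set \<Rightarrow> ('a \<Rightarrow> 'a \<Rightarrow> 'a) \<Rightarrow> 'a \<Rightarrow> bool" where
  "jordan_loop Q m e \<longleftrightarrow> loop Q m e
     \<and> (\<forall>a\<in>Q. \<forall>b\<in>Q. m a b = m b a)
     \<and> (\<forall>x\<in>Q. \<forall>y\<in>Q. m (m x x) (m y x) = m (m (m x x) y) x)"

primrec lpow :: "('a \<Rightarrow> 'a \<Rightarrow> 'a) \<Rightarrow> 'a \<Rightarrow> 'a \<Rightarrow> nat \<Rightarrow> 'a" where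
  "lpow m e x 0 = e"
| "lpow m e x (Suc k) = m x (lpow m e x k)"

definition subloop :: "'a set \<Rightarrow> ('a \<Rightarrow> 'a \<Rightarrow> 'a) \<Rightarrow> 'a \<Rightarrow> 'a set \<Rightarrow> bool" where
  "subloop Q m e H \<longleftrightarrow> H \<subseteq> Q \<and> e \<in> H \<and> (\<forall>a\<in>H. \<forall>b\<in>H. m a b \<in> H)
     \<and> (\<forall>a\<in>H. \<forall>b\<in>H. \<forall>x\<in>Q. m a x = b \<longrightarrow> x \<in> H)
     \<and> (\<forall>a\<in>H. \<forall>b\<in>H. \<forall>y\<in>Q. m y a = b \<longrightarrow> y \<in> H)"

definition gen_subloop :: "'a set \<Rightarrow> ('a \<Rightarrow> 'a \<Rightarrow> 'a) \<Rightarrow> 'a \<Rightarrow> 'a \<Rightarrow> 'a set" where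
  "gen_subloop Q m e x = \<Inter>{H. subloop Q m e H \<and> x \<in> H}"

end

theory Submission
  imports Defs
begin

text \<open>Let \<open>n\<close> be the order of \<open>x\<close>, the least \<open>n > 0\<close> with \<open>x^n = e\<close>. The powers
  \<open>x^0, ..., x^(n-1)\<close> are distinct, so \<open>n \<le> 9\<close>, and for \<open>n = 9\<close> they exhaust \<open>Q\<close>.
  In a commutative loop of odd order squaring is a bijection, and the Jordan identity yields
  \<open>x^2 x^k = x^(k+2)\<close> and \<open>x^4 x^(2k) = x^(2k+4)\<close>; so an even \<open>n \<le> 8\<close> would give \<open>e\<close> or
  \<open>x^2\<close> two square roots among the powers, while for \<open>n \<in> {1, 3, 5}\<close> the powers of \<open>x\<close>
  multiply by adding exponents, form a subloop, and hence are all of \<open>Q\<close>. For \<open>n = 7\<close>, any \<open>q\<close>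
  outside the powers yields three elements \<open>q, x q, x^2 q\<close> outside them, one too many.\<close>

lemma even_card_if_fixpoint_free_involution:
  assumes "finite A" and "\<forall>a\<in>A. f a \<in> A \<and> f a \<noteq> a \<and> f (f a) = a"
  shows "even (card A)"
  using assms
proof (induction "card A" arbitrary: A rule: less_induct)
  case less
  show ?case
  proof (cases "A = {}")
    case False
    then obtain a where a: "a \<in> A" by blast
    define B where "B = A - {a, f a}"
    have fa: "f a \<in> A" "f a \<noteq> a" using less.prems a by auto
    have card_A: "card A = card B + 2"
      using fa a less.prems(1) card_mono[of A "{a, f a}"]
      by (simp add: B_def card_Diff_subset)
    have "even (card B)"
    proof (rule less.hyps)
      show "card B < card A" "finite B" using card_A less.prems(1) by (auto simp: B_def)
      show "\<forall>b\<in>B. f b \<in> B \<and> f b \<noteq> b \<and> f (f b) = b"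
      proof
        fix b assume b: "b \<in> B"
        then have "f b \<in> A" "f b \<noteq> b" "f (f b) = b" "f (f a) = a"
          using less.prems(2) a by (auto simp: B_def)
        moreover have "f b \<noteq> a" "f b \<noteq> f a" using b calculation by (auto simp: B_def)
        ultimately show "f b \<in> B \<and> f b \<noteq> b \<and> f (f b) = b" by (simp add: B_def)
      qed
    qed
    then show ?thesis using card_A by simp
  qed simp
qed

locale loop_on =
  fixes Q :: "'a set" and m :: "'a \<Rightarrow> 'a \<Rightarrow> 'a" and e :: 'a
  assumes loop: "loop Q m e"
begin

lemma unit_closed: "e \<in> Q"
  using loop by (simp add: loop_def)

lemma mult_closed: "a \<in> Q \<Longrightarrow> b \<in> Q \<Longrightarrow> m a b \<in> Q"
  using loop by (simp add: loop_def)

lemma left_unit: "a \<in> Q \<Longrightarrow> m e a = a"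
  using loop by (simp add: loop_def)

lemma right_unit: "a \<in> Q \<Longrightarrow> m a e = a"
  using loop by (simp add: loop_def)

lemma left_div_ex1: "a \<in> Q \<Longrightarrow> b \<in> Q \<Longrightarrow> \<exists>!x. x \<in> Q \<and> m a x = b"
  using loop by (simp add: loop_def)

lemma right_div_ex1: "a \<in> Q \<Longrightarrow> b \<in> Q \<Longrightarrow> \<exists>!y. y \<in> Q \<and> m y a = b"
  using loop by (simp add: loop_def)

lemma left_cancel: "a \<in> Q \<Longrightarrow> b \<in> Q \<Longrightarrow> c \<in> Q \<Longrightarrow> m a b = m a c \<Longrightarrow> b = c"
  using left_div_ex1[of a "m a b"] mult_closed[of a b] by auto

lemma right_cancel: "a \<in> Q \<Longrightarrow> b \<in> Q \<Longrightarrow> c \<in> Q \<Longrightarrow> m b a = m c a \<Longrightarrow> b = c"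
  using right_div_ex1[of a "m b a"] mult_closed[of b a] by auto

text \<open>Translations by elements of \<open>H\<close> are injective maps of the finite set \<open>H\<close> into itself,
  hence onto.\<close>
lemma subloopI:
  assumes "finite Q" and "H \<subseteq> Q" and "e \<in> H"
    and closed: "\<And>a b. a \<in> H \<Longrightarrow> b \<in> H \<Longrightarrow> m a b \<in> H"
  shows "subloop Q m e H"
proof -
  have "finite H" using assms(1,2) by (rule finite_subset[rotated])
  have left: "y \<in> H" if "a \<in> H" "b \<in> H" "y \<in> Q" "m a y = b" for a b y
  proof -
    have "inj_on (m a) H"
    proof (rule inj_onI)
      fix y z assume "y \<in> H" "z \<in> H" "m a y = m a z"
      then show "y = z" using left_cancel[of a y z] \<open>a \<in> H\<close> \<open>H \<subseteq> Q\<close> by blast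
    qed
    moreover have "m a ` H \<subseteq> H" using closed \<open>a \<in> H\<close> by blast
    ultimately have "b \<in> m a ` H" using endo_inj_surj[OF \<open>finite H\<close>] \<open>b \<in> H\<close> by blast
    then obtain y' where "y' \<in> H" "m a y' = b" by blast
    then show ?thesis using that left_cancel[of a y y'] \<open>H \<subseteq> Q\<close> by auto
  qed
  have right: "y \<in> H" if "a \<in> H" "b \<in> H" "y \<in> Q" "m y a = b" for a b y
  proof -
    have "inj_on (\<lambda>y. m y a) H"
    proof (rule inj_onI)
      fix y z assume "y \<in> H" "z \<in> H" "m y a = m z a"
      then show "y = z" using right_cancel[of a y z] \<open>a \<in> H\<close> \<open>H \<subseteq> Q\<close> by blast
    qed
    moreover have "(\<lambda>y. m y a) ` H \<subseteq> H" using closed \<open>a \<in> H\<close> by blast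
    ultimately have "b \<in> (\<lambda>y. m y a) ` H" using endo_inj_surj[OF \<open>finite H\<close>] \<open>b \<in> H\<close> by blast
    then obtain y' where "y' \<in> H" "m y' a = b" by blast
    then show ?thesis using that right_cancel[of a y y'] \<open>H \<subseteq> Q\<close> by auto
  qed
  show ?thesis
    unfolding subloop_def using assms(2,3) closed left right by blast
qed

lemma lpow_closed: "x \<in> Q \<Longrightarrow> lpow m e x k \<in> Q"
  by (induction k) (simp_all add: unit_closed mult_closed)

lemma lpow_one: "x \<in> Q \<Longrightarrow> lpow m e x 1 = x"
  by (simp add: right_unit)

lemma lpow_eq_imp_unit:
  assumes "x \<in> Q" and "i < j" and "lpow m e x i = lpow m e x j"
  shows "lpow m e x (j - i) = e"
proof -
  have "lpow m e x (k + (j - i)) = lpow m e x k \<Longrightarrow> lpow m e x (j - i) = e" for k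
  proof (induction k)
    case (Suc k)
    then have "m x (lpow m e x (k + (j - i))) = m x (lpow m e x k)" by simp
    then show ?case
      using Suc.IH left_cancel[OF assms(1) lpow_closed[OF assms(1)] lpow_closed[OF assms(1)]] by simp
  qed simp
  from this[of i] show ?thesis using assms(2,3) by simp
qed

text \<open>Junk unless some positive power of \<open>x\<close> is \<open>e\<close>, hence the finiteness assumption below.\<close>
definition ord :: "'a \<Rightarrow> nat" where
  "ord x = (LEAST d. 0 < d \<and> lpow m e x d = e)"

context
  fixes x
  assumes finite: "finite Q" and x: "x \<in> Q"
begin

lemma lpow_eq_unit_ex: "\<exists>d>0. lpow m e x d = e"
proof (rule ccontr)
  assume no_unit: "\<not> (\<exists>d>0. lpow m e x d = e)"
  have "inj_on (lpow m e x) {..card Q}"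
  proof (rule linorder_inj_onI')
    fix i j :: nat assume "i < j"
    then show "lpow m e x i \<noteq> lpow m e x j"
      using no_unit lpow_eq_imp_unit[OF x, of i j] zero_less_diff[of j i] by blast
  qed
  then have "card {..card Q} \<le> card Q"
    using card_inj_on_le[OF _ _ finite] lpow_closed[OF x] by blast
  then show False by simp
qed

lemma ord_pos: "0 < ord x"
  and lpow_ord: "lpow m e x (ord x) = e"
  using LeastI_ex[OF lpow_eq_unit_ex] by (simp_all add: ord_def)

lemma ord_least: "0 < d \<Longrightarrow> lpow m e x d = e \<Longrightarrow> ord x \<le> d"
  unfolding ord_def by (rule Least_le) simp

lemma lpow_mod_ord: "lpow m e x k = lpow m e x (k mod ord x)"
proof (induction k rule: less_induct)
  case (less k)
  show ?case
  proof (cases "k < ord x")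
    case False
    have shift: "lpow m e x (j + ord x) = lpow m e x j" for j
      by (induction j) (simp_all add: lpow_ord)
    have "lpow m e x k = lpow m e x (k - ord x)"
      using shift[of "k - ord x"] False by simp
    also have "\<dots> = lpow m e x (k mod ord x)"
      using less.IH[of "k - ord x"] ord_pos False by (simp add: le_mod_geq)
    finally show ?thesis .
  qed simp
qed

lemma inj_on_lpow_ord: "inj_on (lpow m e x) {..<ord x}"
proof (rule linorder_inj_onI')
  fix i j assume "i \<in> {..<ord x}" "j \<in> {..<ord x}" "i < j"
  then show "lpow m e x i \<noteq> lpow m e x j"
    using lpow_eq_imp_unit[OF x, of i j] ord_least[of "j - i"] by auto
qed

lemma range_lpow: "range (lpow m e x) = lpow m e x ` {..<ord x}"
proof -
  have "lpow m e x k \<in> lpow m e x ` {..<ord x}" for k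
    using lpow_mod_ord[of k] mod_less_divisor[OF ord_pos] by simp
  then show ?thesis by (intro subset_antisym) auto
qed

lemma range_lpow_from_one: "range (lpow m e x) = lpow m e x ` {1..ord x}"
proof -
  have "lpow m e x k \<in> lpow m e x ` {1..ord x}" if "k < ord x" for k
  proof (cases "k = 0")
    case True
    then show ?thesis
      using lpow_ord ord_pos image_eqI[of e "lpow m e x" "ord x" "{1..ord x}"] by simp
  qed (use that in auto)
  then show ?thesis using range_lpow by (intro subset_antisym) auto
qed

lemma card_range_lpow: "card (range (lpow m e x)) = ord x"
  using range_lpow inj_on_lpow_ord by (simp add: card_image)

lemma range_lpow_subset: "range (lpow m e x) \<subseteq> Q"
  using lpow_closed[OF x] by blast

lemma ord_le_card: "ord x \<le> card Q"
  using card_mono[OF finite range_lpow_subset] card_range_lpow by simp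

lemma range_lpow_eq_carrier_if_lpow_add:
  assumes "gen_subloop Q m e x = Q"
    and "\<And>i j. m (lpow m e x i) (lpow m e x j) = lpow m e x (i + j)"
  shows "range (lpow m e x) = Q"
proof -
  have "subloop Q m e (range (lpow m e x))"
  proof (rule subloopI[OF finite range_lpow_subset])
    show "e \<in> range (lpow m e x)" using rangeI[of "lpow m e x" 0] by simp
    show "m a b \<in> range (lpow m e x)" if "a \<in> range (lpow m e x)" "b \<in> range (lpow m e x)" for a b
      using that assms(2) by auto
  qed
  moreover have "x \<in> range (lpow m e x)" using rangeI[of "lpow m e x" 1] lpow_one[OF x] by simp
  ultimately have "Q \<subseteq> range (lpow m e x)"
    using assms(1) unfolding gen_subloop_def by blast
  then show ?thesis using range_lpow_subset by blast
qed

end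

end

locale comm_loop_on = loop_on +
  assumes commute: "a \<in> Q \<Longrightarrow> b \<in> Q \<Longrightarrow> m a b = m b a"
begin

text \<open>The solutions \<open>(a, b)\<close> of \<open>a b = w\<close> are as many as the elements of \<open>Q\<close>, and those with
  \<open>a \<noteq> b\<close> pair off under swapping; for odd order some solution has \<open>a = b\<close>.\<close>
lemma square_root_ex:
  assumes "finite Q" and "odd (card Q)" and "w \<in> Q"
  shows "\<exists>a\<in>Q. m a a = w"
proof -
  define S where "S = {(a, b). a \<in> Q \<and> b \<in> Q \<and> m a b = w}"
  have "bij_betw fst S Q"
  proof (rule bij_betw_imageI)
    show "inj_on fst S"
    proof (rule inj_onI)
      fix p q assume "p \<in> S" "q \<in> S" "fst p = fst q"
      then show "p = q"
        using left_cancel[of "fst p" "snd p" "snd q"] unfolding S_def by (cases p, cases q) auto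
    qed
    have "a \<in> fst ` S" if a: "a \<in> Q" for a
    proof -
      obtain b where "b \<in> Q" "m a b = w" using left_div_ex1[OF a assms(3)] by blast
      then have "(a, b) \<in> S" using a by (simp add: S_def)
      then show ?thesis by (metis fst_conv image_eqI)
    qed
    moreover have "fst ` S \<subseteq> Q" unfolding S_def by auto
    ultimately show "fst ` S = Q" by blast
  qed
  then have card_S: "card S = card Q" by (rule bij_betw_same_card)
  have "S \<subseteq> Q \<times> Q" by (auto simp: S_def)
  then have "finite S" using assms(1) finite_subset by blast
  define D where "D = {p \<in> S. fst p = snd p}"
  have "D \<subseteq> S" by (simp add: D_def)
  then have "card S = card D + card (S - D)"
    using \<open>finite S\<close> card_Diff_subset[of D S] card_mono[of S D] finite_subset[of D S] by simp
  moreover have "even (card (S - D))"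
  proof (rule even_card_if_fixpoint_free_involution[where f = prod.swap])
    show "finite (S - D)" using \<open>finite S\<close> by simp
    show "\<forall>p\<in>S - D. prod.swap p \<in> S - D \<and> prod.swap p \<noteq> p \<and> prod.swap (prod.swap p) = p"
    proof
      fix p assume "p \<in> S - D"
      then obtain a b where "p = (a, b)" "a \<in> Q" "b \<in> Q" "m a b = w" "a \<noteq> b"
        by (auto simp: S_def D_def)
      then show "prod.swap p \<in> S - D \<and> prod.swap p \<noteq> p \<and> prod.swap (prod.swap p) = p"
        using commute[of a b] by (simp add: S_def D_def)
    qed
  qed
  ultimately have "D \<noteq> {}" using card_S assms(2) by (metis add_0 card.empty)
  then obtain a where "(a, a) \<in> S" unfolding D_def by auto
  then show ?thesis by (auto simp: S_def)
qed

lemma inj_on_square: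
  assumes "finite Q" and "odd (card Q)"
  shows "inj_on (\<lambda>a. m a a) Q"
proof (rule eq_card_imp_inj_on[OF assms(1)])
  have "(\<lambda>a. m a a) ` Q = Q" using square_root_ex[OF assms] mult_closed by force
  then show "card ((\<lambda>a. m a a) ` Q) = card Q" by simp
qed

end

locale jordan_loop_on = comm_loop_on +
  assumes jordan_identity: "a \<in> Q \<Longrightarrow> b \<in> Q \<Longrightarrow> m (m a a) (m b a) = m (m (m a a) b) a"
begin

lemma lpow_two_mult:
  assumes x: "x \<in> Q"
  shows "m (lpow m e x 2) (lpow m e x k) = lpow m e x (k + 2)"
proof (induction k)
  case 0
  show ?case using right_unit[OF lpow_closed[OF x, of 2]] by (simp add: numeral_2_eq_2)
next
  case (Suc k)
  have sq: "lpow m e x 2 = m x x" using right_unit[OF x] by (simp add: numeral_2_eq_2)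
  have P: "lpow m e x k \<in> Q" by (rule lpow_closed[OF x])
  have "m (lpow m e x 2) (lpow m e x (Suc k)) = m (m x x) (m (lpow m e x k) x)"
    using sq commute[OF x P] by simp
  also have "\<dots> = m (m (m x x) (lpow m e x k)) x" by (rule jordan_identity[OF x P])
  also have "\<dots> = m x (m (m x x) (lpow m e x k))" by (rule commute[OF mult_closed[OF mult_closed[OF x x] P] x])
  also have "\<dots> = lpow m e x (Suc k + 2)" using Suc.IH sq by simp
  finally show ?case .
qed

lemma lpow_mult_if_le_2:
  assumes "x \<in> Q" and "i \<le> 2"
  shows "m (lpow m e x i) (lpow m e x j) = lpow m e x (i + j)"
proof -
  consider "i = 0" | "i = 1" | "i = 2" using assms(2) by linarith
  then show ?thesis
  proof cases
    case 1
    then show ?thesis using left_unit[OF lpow_closed[OF assms(1)]] by simp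
  next
    case 2
    then show ?thesis using lpow_one[OF assms(1)] by simp
  next
    case 3
    then show ?thesis using lpow_two_mult[OF assms(1)] by (simp add: add.commute)
  qed
qed

lemma lpow_four_mult_even:
  assumes x: "x \<in> Q"
  shows "m (lpow m e x 4) (lpow m e x (2 * k)) = lpow m e x (2 * k + 4)"
proof (induction k)
  case 0
  show ?case using right_unit[OF lpow_closed[OF x]] by simp
next
  case (Suc k)
  let ?P = "lpow m e x"
  have Q: "?P 2 \<in> Q" "?P (2 * k) \<in> Q" by (simp_all add: lpow_closed[OF x])
  have four: "?P 4 = m (?P 2) (?P 2)" using lpow_two_mult[OF x, of 2] by simp
  have "m (?P 4) (?P (2 * Suc k)) = m (m (?P 2) (?P 2)) (m (?P (2 * k)) (?P 2))"
    using four lpow_two_mult[OF x, of "2 * k"] commute[OF Q] by simp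
  also have "\<dots> = m (m (?P 4) (?P (2 * k))) (?P 2)" using jordan_identity[OF Q] four by simp
  also have "\<dots> = m (?P 2) (?P (2 * k + 4))" using Suc.IH commute[OF lpow_closed[OF x] Q(1)] by simp
  also have "\<dots> = ?P (2 * Suc k + 4)" using lpow_two_mult[OF x, of "2 * k + 4"] by simp
  finally show ?case .
qed

context
  fixes x
  assumes finite: "finite Q" and x: "x \<in> Q"
begin

lemma lpow_add_if_ord_le_3:
  assumes "ord x \<le> 3"
  shows "m (lpow m e x i) (lpow m e x j) = lpow m e x (i + j)"
proof -
  have "i mod ord x \<le> 2" using mod_less_divisor[OF ord_pos[OF finite x], of i] assms by linarith
  then have "m (lpow m e x (i mod ord x)) (lpow m e x j) = lpow m e x (i mod ord x + j)"
    by (rule lpow_mult_if_le_2[OF x])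
  also have "\<dots> = lpow m e x (i + j)"
    using lpow_mod_ord[OF finite x, of "i mod ord x + j"] lpow_mod_ord[OF finite x, of "i + j"]
    by (simp add: mod_add_left_eq)
  finally show ?thesis using lpow_mod_ord[OF finite x, of i] by simp
qed

lemma lpow_add_if_ord_5:
  assumes "ord x = 5"
  shows "m (lpow m e x i) (lpow m e x j) = lpow m e x (i + j)"
proof -
  let ?P = "lpow m e x"
  have P_cong: "?P k = ?P l" if "k mod 5 = l mod 5" for k l
    using lpow_mod_ord[OF finite x, of k] lpow_mod_ord[OF finite x, of l] assms that by simp
  have closed: "?P k \<in> Q" for k by (rule lpow_closed[OF x])
  have four: "m (?P 4) (?P k) = ?P (k + 4)" for k
  proof -
    have "k mod 5 = (2 * (3 * k)) mod 5" "(2 * (3 * k) + 4) mod 5 = (k + 4) mod 5" by presburger+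
    then have "m (?P 4) (?P k) = m (?P 4) (?P (2 * (3 * k)))" using P_cong by metis
    also have "\<dots> = ?P (k + 4)"
      using lpow_four_mult_even[OF x, of "3 * k"] P_cong[OF \<open>(2 * (3 * k) + 4) mod 5 = (k + 4) mod 5\<close>]
      by simp
    finally show ?thesis .
  qed
  have three: "m (?P 3) (?P 3) = ?P 6"
  proof -
    \<comment> \<open>\<open>x^8 = x^3\<close>, so the Jordan identity at \<open>x^4\<close> computes \<open>x^3 x^3\<close>.\<close>
    have P3: "?P 3 = m (?P 4) (?P 4)" using four[of 4] P_cong[of 3 8] by simp
    have "m (?P 3) (?P 3) = m (m (?P 3) (?P 4)) (?P 4)"
      using jordan_identity[OF closed closed, of 4 4] P3 by simp
    also have "\<dots> = ?P 6"
      using four[of 3] four[of 7] commute[OF closed closed] P_cong[of 11 6] by simp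
    finally show ?thesis .
  qed
  have small: "m (?P a) (?P b) = ?P (a + b)" if "a < 5" "b < 5" for a b
  proof -
    have "a \<le> 2 \<or> b \<le> 2 \<or> a = 4 \<or> b = 4 \<or> (a = 3 \<and> b = 3)" using that by linarith
    then show ?thesis
    proof (elim disjE conjE)
      assume "a \<le> 2"
      then show ?thesis by (rule lpow_mult_if_le_2[OF x])
    next
      assume b: "b \<le> 2"
      show ?thesis using lpow_mult_if_le_2[OF x b, of a] commute[OF closed closed] by (simp add: add.commute)
    next
      assume "a = 4"
      then show ?thesis using four[of b] by (simp add: add.commute)
    next
      assume "b = 4"
      then show ?thesis using four[of a] commute[OF closed closed] by simp
    next
      assume "a = 3" "b = 3"
      then show ?thesis using three by simp
    qed
  qed
  have "m (?P i) (?P j) = m (?P (i mod 5)) (?P (j mod 5))"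
    using P_cong[of i "i mod 5"] P_cong[of j "j mod 5"] by simp
  also have "\<dots> = ?P (i mod 5 + j mod 5)" by (rule small) simp_all
  also have "\<dots> = ?P (i + j)" by (rule P_cong) (simp add: mod_add_eq)
  finally show ?thesis .
qed

lemma odd_ord_if_le_8:
  assumes "odd (card Q)" and "ord x \<le> 8"
  shows "odd (ord x)"
proof
  assume "even (ord x)"
  let ?P = "lpow m e x" and ?n = "ord x"
  have square: "m (?P a) (?P a) = ?P (2 * a)" if "a \<in> {0, 1, 2, 4}" for a
  proof (cases "a = 4")
    case False
    then have "a \<le> 2" using that by auto
    then show ?thesis using lpow_mult_if_le_2[OF x, of a a] by (simp add: mult_2)
  qed (use lpow_four_mult_even[OF x, of 2] in simp)
  have square_root_unique: "?P a = ?P b"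
    if "a \<in> {0, 1, 2, 4}" "b \<in> {0, 1, 2, 4}" "?P (2 * a) = ?P (2 * b)" for a b
    using inj_on_square[OF finite assms(1)] square[OF that(1)] square[OF that(2)] that(3)
      lpow_closed[OF x] by (auto simp: inj_on_def)
  have distinct: "a = b" if "a < ?n" "b < ?n" "?P a = ?P b" for a b
    using inj_on_lpow_ord[OF finite x] that by (auto simp: inj_on_def)
  have P_n: "?P ?n = ?P 0" using lpow_ord[OF finite x] by simp
  have "?n \<in> {2, 4, 6, 8}"
    using \<open>even ?n\<close> assms(2) ord_pos[OF finite x] by (auto simp: even_iff_mod_2_eq_zero)
  then show False
  proof (elim insertE)
    assume n: "?n = 6"
    have "?P 8 = ?P 2" using lpow_mod_ord[OF finite x, of 8] n by simp
    then show False using square_root_unique[of 4 1] distinct[of 4 1] n by simp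
  qed (use square_root_unique[of "?n div 2" 0] distinct[of "?n div 2" 0] P_n in auto)
qed

lemma ord_add_3_le_card:
  assumes "2 < ord x" and "range (lpow m e x) \<noteq> Q"
  shows "ord x + 3 \<le> card Q"
proof -
  let ?P = "lpow m e x" and ?n = "ord x"
  obtain q where q: "q \<in> Q" "q \<notin> range ?P" using assms(2) range_lpow_subset[OF finite x] by blast
  have outside: "m (?P k) q \<notin> range ?P" if "k \<le> 2" for k
  proof
    assume "m (?P k) q \<in> range ?P"
    then obtain j where "m (?P k) q = ?P j" by blast
    also have "\<dots> = ?P (j + ?n)" using lpow_mod_ord[OF finite x, of j] lpow_mod_ord[OF finite x, of "j + ?n"] by simp
    also have "\<dots> = m (?P k) (?P (j + ?n - k))"
      using lpow_mult_if_le_2[OF x that, of "j + ?n - k"] that assms(1) by simp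
    finally have "q = ?P (j + ?n - k)"
      using left_cancel[OF lpow_closed[OF x, of k] q(1) lpow_closed[OF x, of "j + ?n - k"]] by simp
    then show False using q(2) by simp
  qed
  have "inj_on (\<lambda>k. m (?P k) q) {..<3}"
  proof (rule inj_onI)
    fix k l assume "k \<in> {..<3}" "l \<in> {..<3}" "m (?P k) q = m (?P l) q"
    then have "?P k = ?P l" using right_cancel[OF q(1) lpow_closed[OF x] lpow_closed[OF x]] by simp
    moreover have "k \<in> {..<?n}" "l \<in> {..<?n}"
      using \<open>k \<in> {..<3}\<close> \<open>l \<in> {..<3}\<close> assms(1) by auto
    ultimately show "k = l" by (rule inj_onD[OF inj_on_lpow_ord[OF finite x]])
  qed
  moreover have "(\<lambda>k. m (?P k) q) ` {..<3} \<subseteq> Q - range ?P"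
  proof
    fix y assume "y \<in> (\<lambda>k. m (?P k) q) ` {..<3}"
    then obtain k where "k < 3" "y = m (?P k) q" by blast
    then show "y \<in> Q - range ?P" using outside[of k] mult_closed[OF lpow_closed[OF x] q(1)] by simp
  qed
  ultimately have "card {..<3::nat} \<le> card (Q - range ?P)"
    using card_inj_on_le finite by blast
  also have "\<dots> = card Q - ?n"
    using card_Diff_subset[OF finite_subset[OF range_lpow_subset[OF finite x] finite] range_lpow_subset[OF finite x]]
      card_range_lpow[OF finite x] by simp
  finally show ?thesis using ord_le_card[OF finite x] by simp
qed

lemma range_lpow_eq_carrier_if_ord_1_3_5:
  assumes "gen_subloop Q m e x = Q" and "ord x \<in> {1, 3, 5}"
  shows "range (lpow m e x) = Q"
proof (rule range_lpow_eq_carrier_if_lpow_add[OF finite x assms(1)])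
  fix i j
  show "m (lpow m e x i) (lpow m e x j) = lpow m e x (i + j)"
    using assms(2) lpow_add_if_ord_le_3[of i j] lpow_add_if_ord_5[of i j] by auto
qed

lemma range_lpow_eq_carrier_if_card_9:
  assumes "card Q = 9" and "gen_subloop Q m e x = Q"
  shows "range (lpow m e x) = Q"
proof (rule ccontr)
  assume ne: "range (lpow m e x) \<noteq> Q"
  then have "ord x \<noteq> card Q"
    using card_subset_eq[OF finite range_lpow_subset[OF finite x]] card_range_lpow[OF finite x] by auto
  then have "ord x \<le> 8" using ord_le_card[OF finite x] assms(1) by simp
  then have "odd (ord x)" using odd_ord_if_le_8 assms(1) by simp
  moreover have "n = 1 \<or> n = 3 \<or> n = 5 \<or> n = 7" if "odd n" "n \<le> 8" for n :: nat
    using that by presburger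
  ultimately have "ord x \<in> {1, 3, 5} \<or> ord x = 7" using \<open>ord x \<le> 8\<close> by auto
  then show False
  proof
    assume "ord x \<in> {1, 3, 5}"
    then show False using range_lpow_eq_carrier_if_ord_1_3_5[OF assms(2)] ne by blast
  next
    assume "ord x = 7"
    then show False using ord_add_3_le_card[OF _ ne] assms(1) by simp
  qed
qed

end

end

lemma jordan_loop_onI: "jordan_loop Q m e \<Longrightarrow> jordan_loop_on Q m e"
  unfolding jordan_loop_def by unfold_locales blast+

theorem lemma3p7:
  fixes Q :: "'a set" and m :: "'a \<Rightarrow> 'a \<Rightarrow> 'a" and e x :: 'a
  assumes "jordan_loop Q m e"
    and "finite Q" and "card Q = 9"
    and "x \<in> Q"
    and "gen_subloop Q m e x = Q"
  shows "Q = {lpow m e x k | k. 1 \<le> k \<and> k \<le> 9}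
         \<and> (\<forall>n::nat. lpow m e x n = lpow m e x (n mod 9))"
proof -
  interpret jordan_loop_on Q m e by (rule jordan_loop_onI[OF assms(1)])
  have range: "range (lpow m e x) = Q"
    using range_lpow_eq_carrier_if_card_9[OF assms(2,4,3,5)] .
  then have "ord x = 9" using card_range_lpow[OF assms(2,4)] assms(3) by simp
  then have "Q = lpow m e x ` {1..9}" using range range_lpow_from_one[OF assms(2,4)] by simp
  moreover have "lpow m e x n = lpow m e x (n mod 9)" for n
    using lpow_mod_ord[OF assms(2,4)] \<open>ord x = 9\<close> by simp
  moreover have "lpow m e x ` {1..9} = {lpow m e x k | k. 1 \<le> k \<and> k \<le> 9}"
    by (auto simp del: lpow.simps)
  ultimately show ?thesis by simp
qed

end
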